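(* For each $n\ge0$ there is an isomorphism of $A_n$-bimodules $D_{n+1}\otimes_{A_{n+1}}I_n\cong A_n$, and consequently an isomorphism of $A$-bimodules $D\otimes_A I\cong A$, where $A=\bigoplus_{n\ge0}A_n$, $D=\bigoplus_{n\ge0}D_{n+1}$ and $I=\bigoplus_{n\ge0}I_n$.
   Context: $A_n$ is the nilCoxeter algebra: the unital $\mathbb{Q}$-algebra generated by $Y_1,\dots,Y_{n-1}$ with relations $Y_i^2=0$, $Y_iY_j=Y_jY_i$ for $|i-j|>1$, $Y_iY_{i+1}Y_i=Y_{i+1}Y_iY_{i+1}$. Let $\chi_n:A_n\to A_{n+1}$, $\chi_n(Y_i)=Y_i$; $D_{n+1}$ is $A_{n+1}$ as an $(A_n,A_{n+1})$-bimodule (left action via $\chi_n$, right by multiplication). Let $t_{n+1}:A_{n+1}\to A_n$ be the algebra homomorphism with $t_{n+1}(Y_i)=Y_i$ for $i<n$ and $t_{n+1}(Y_n)=0$. $I_n$ is the $(A_{n+1},A_n)$-bimodule equal to $A_n$ as a right $A_n$-module, with left $A_{n+1}$-action via $t_{n+1}$. An $(A_n,A_k)$-bimodule is regarded as an $A$-bimodule on which $A_i$ acts by $0$ on the left for $i\neq n$ and on the right for $i\ne k$. *)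

theory Defs
  imports Complex_Main "HOL-Algebra.QuotRing"
begin

text \<open>Noncommutative polynomials over Q in the letters 1,2,...: finitely supported
  functions from words (nat lists) to rat. The product is concatenation convolution.\<close>

type_synonym ncpoly = "nat list \<Rightarrow> rat"

definition nc_mult :: "ncpoly \<Rightarrow> ncpoly \<Rightarrow> ncpoly" where
  "nc_mult f g = (\<lambda>w. \<Sum>k\<le>length w. f (take k w) * g (drop k w))"

definition nc_one :: ncpoly where
  "nc_one = (\<lambda>w. if w = [] then 1 else 0)"

definition nc_gen :: "nat \<Rightarrow> ncpoly" where
  "nc_gen i = (\<lambda>w. if w = [i] then 1 else 0)"

definition nc_diff :: "ncpoly \<Rightarrow> ncpoly \<Rightarrow> ncpoly" where
  "nc_diff f g = (\<lambda>w. f w - g w)"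

text \<open>Free algebra on the generators Y_1, ..., Y_(n-1) (letters in {1..<n}).\<close>
definition FA :: "nat \<Rightarrow> ncpoly ring" where
  "FA n = \<lparr>carrier = {f. finite {w. f w \<noteq> 0} \<and> (\<forall>w. f w \<noteq> 0 \<longrightarrow> set w \<subseteq> {1..<n})},
            mult = nc_mult, one = nc_one, zero = (\<lambda>w. 0), add = (\<lambda>f g w. f w + g w)\<rparr>"

definition nilcox_rels :: "nat \<Rightarrow> ncpoly set" where
  "nilcox_rels n =
     {nc_mult (nc_gen i) (nc_gen i) | i. i \<in> {1..<n}}
   \<union> {nc_diff (nc_mult (nc_gen i) (nc_gen j)) (nc_mult (nc_gen j) (nc_gen i)) | i j.
        i \<in> {1..<n} \<and> j \<in> {1..<n} \<and> (i > j + 1 \<or> j > i + 1)}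
   \<union> {nc_diff (nc_mult (nc_mult (nc_gen i) (nc_gen (i+1))) (nc_gen i))
              (nc_mult (nc_mult (nc_gen (i+1)) (nc_gen i)) (nc_gen (i+1))) | i.
        i \<in> {1..<n} \<and> i + 1 \<in> {1..<n}}"

definition nilcox_ideal :: "nat \<Rightarrow> ncpoly set" where
  "nilcox_ideal n = genideal (FA n) (nilcox_rels n)"

text \<open>The nilCoxeter algebra A_n (generators Y_1..Y_(n-1)); A_0 = A_1 = Q.\<close>
definition NC :: "nat \<Rightarrow> ncpoly set ring" where
  "NC n = FA n Quot nilcox_ideal n"

type_synonym ncel = "ncpoly set"

definition rep :: "'a set \<Rightarrow> 'a" where
  "rep C = (SOME f. f \<in> C)"

text \<open>chi_n : A_n \<rightarrow> A_(n+1), induced by Y_i \<mapsto> Y_i (inclusion of free algebras).\<close>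
definition chi :: "nat \<Rightarrow> ncel \<Rightarrow> ncel" where
  "chi n C = a_r_coset (FA (Suc n)) (nilcox_ideal (Suc n)) (rep C)"

text \<open>t_(n+1) : A_(n+1) \<rightarrow> A_n, induced by Y_i \<mapsto> Y_i (i<n), Y_n \<mapsto> 0;
  on the free algebra this kills every word containing the letter n.\<close>
definition kill_letter :: "nat \<Rightarrow> ncpoly \<Rightarrow> ncpoly" where
  "kill_letter n f = (\<lambda>w. if n \<in> set w then 0 else f w)"

definition tmap :: "nat \<Rightarrow> ncel \<Rightarrow> ncel" where
  "tmap n C = a_r_coset (FA n) (nilcox_ideal n) (kill_letter n (rep C))"
  \<comment> \<open>tmap n is t_(n+1) : A_(n+1) \<rightarrow> A_n\<close>

record ('r, 's, 'm) bimod =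
  bcar  :: "'m set"
  badd  :: "'m \<Rightarrow> 'm \<Rightarrow> 'm"
  bzero :: "'m"
  lact  :: "'r \<Rightarrow> 'm \<Rightarrow> 'm"
  ract  :: "'m \<Rightarrow> 's \<Rightarrow> 'm"

definition bimod_iso :: "'r set \<Rightarrow> 's set \<Rightarrow> ('r,'s,'m) bimod \<Rightarrow> ('r,'s,'n) bimod \<Rightarrow> ('m \<Rightarrow> 'n) \<Rightarrow> bool" where
  "bimod_iso P S M N \<phi> \<longleftrightarrow>
     bij_betw \<phi> (bcar M) (bcar N) \<and>
     (\<forall>x\<in>bcar M. \<forall>y\<in>bcar M. \<phi> (badd M x y) = badd N (\<phi> x) (\<phi> y)) \<and>
     (\<forall>a\<in>P. \<forall>x\<in>bcar M. \<phi> (lact M a x) = lact N a (\<phi> x)) \<and>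
     (\<forall>a\<in>S. \<forall>x\<in>bcar M. \<phi> (ract M x a) = ract N (\<phi> x) a)"

text \<open>Free abelian group on bcar M \<times> bcar N: finitely supported integer-valued functions.\<close>
definition tfree :: "('p,'r,'m) bimod \<Rightarrow> ('r,'s,'n) bimod \<Rightarrow> ('m \<times> 'n \<Rightarrow> int) set" where
  "tfree M N = {f. finite {x. f x \<noteq> 0} \<and> {x. f x \<noteq> 0} \<subseteq> bcar M \<times> bcar N}"

definition delta :: "'a \<Rightarrow> 'a \<Rightarrow> int" where
  "delta x = (\<lambda>y. if y = x then 1 else 0)"

definition trels :: "'r set \<Rightarrow> ('p,'r,'m) bimod \<Rightarrow> ('r,'s,'n) bimod \<Rightarrow> ('m \<times> 'n \<Rightarrow> int) set" where
  "trels R M N =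
     {(\<lambda>y. delta (badd M m m', n) y - delta (m, n) y - delta (m', n) y) | m m' n.
        m \<in> bcar M \<and> m' \<in> bcar M \<and> n \<in> bcar N}
   \<union> {(\<lambda>y. delta (m, badd N n n') y - delta (m, n) y - delta (m, n') y) | m n n'.
        m \<in> bcar M \<and> n \<in> bcar N \<and> n' \<in> bcar N}
   \<union> {(\<lambda>y. delta (ract M m r, n) y - delta (m, lact N r n) y) | m r n.
        m \<in> bcar M \<and> r \<in> R \<and> n \<in> bcar N}"

inductive_set tker :: "'r set \<Rightarrow> ('p,'r,'m) bimod \<Rightarrow> ('r,'s,'n) bimod \<Rightarrow> ('m \<times> 'n \<Rightarrow> int) set"
  for R M N where
  tker_gen: "f \<in> trels R M N \<Longrightarrow> f \<in> tker R M N"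
| tker_zero: "(\<lambda>y. 0) \<in> tker R M N"
| tker_diff: "f \<in> tker R M N \<Longrightarrow> g \<in> tker R M N \<Longrightarrow> (\<lambda>y. f y - g y) \<in> tker R M N"

definition tcls :: "'r set \<Rightarrow> ('p,'r,'m) bimod \<Rightarrow> ('r,'s,'n) bimod \<Rightarrow> ('m \<times> 'n \<Rightarrow> int) \<Rightarrow> ('m \<times> 'n \<Rightarrow> int) set" where
  "tcls R M N f = {g \<in> tfree M N. (\<lambda>y. g y - f y) \<in> tker R M N}"

definition push :: "('a \<Rightarrow> 'b) \<Rightarrow> ('a \<Rightarrow> int) \<Rightarrow> ('b \<Rightarrow> int)" where
  "push h f = (\<lambda>y. \<Sum>x\<in>{x. f x \<noteq> 0 \<and> h x = y}. f x)"

definition tensor :: "'r set \<Rightarrow> ('p,'r,'m) bimod \<Rightarrow> ('r,'s,'n) bimod \<Rightarrow> ('p, 's, ('m \<times> 'n \<Rightarrow> int) set) bimod" where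
  "tensor R M N =
     \<lparr>bcar = tcls R M N ` tfree M N,
      badd = (\<lambda>C D. tcls R M N (\<lambda>y. rep C y + rep D y)),
      bzero = tcls R M N (\<lambda>y. 0),
      lact = (\<lambda>p C. tcls R M N (push (\<lambda>(m, n). (lact M p m, n)) (rep C))),
      ract = (\<lambda>C s. tcls R M N (push (\<lambda>(m, n). (m, ract N n s)) (rep C)))\<rparr>"

definition regular :: "('a, 'b) ring_scheme \<Rightarrow> ('a, 'a, 'a) bimod" where
  "regular R = \<lparr>bcar = carrier R, badd = add R, bzero = zero R,
                lact = mult R, ract = mult R\<rparr>"

text \<open>D_(n+1): A_(n+1) as (A_n, A_(n+1))-bimodule, left action via chi_n.\<close>
definition Dmod :: "nat \<Rightarrow> (ncel, ncel, ncel) bimod" where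
  "Dmod n = \<lparr>bcar = carrier (NC (Suc n)), badd = add (NC (Suc n)), bzero = zero (NC (Suc n)),
             lact = (\<lambda>a x. mult (NC (Suc n)) (chi n a) x),
             ract = mult (NC (Suc n))\<rparr>"

text \<open>I_n: A_n as (A_(n+1), A_n)-bimodule, left action via t_(n+1).\<close>
definition Imod :: "nat \<Rightarrow> (ncel, ncel, ncel) bimod" where
  "Imod n = \<lparr>bcar = carrier (NC n), badd = add (NC n), bzero = zero (NC n),
             lact = (\<lambda>a x. mult (NC n) (tmap n a) x),
             ract = mult (NC n)\<rparr>"

text \<open>A = \<Oplus>_n A_n: finitely supported sections, componentwise operations.\<close>
definition Asum_car :: "(nat \<Rightarrow> ncel) set" where
  "Asum_car = {a. (\<forall>n. a n \<in> carrier (NC n)) \<and> finite {n. a n \<noteq> zero (NC n)}}"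

definition Areg :: "(nat \<Rightarrow> ncel, nat \<Rightarrow> ncel, nat \<Rightarrow> ncel) bimod" where
  "Areg = \<lparr>bcar = Asum_car,
           badd = (\<lambda>a b n. add (NC n) (a n) (b n)),
           bzero = (\<lambda>n. zero (NC n)),
           lact = (\<lambda>a b n. mult (NC n) (a n) (b n)),
           ract = (\<lambda>a b n. mult (NC n) (a n) (b n))\<rparr>"

text \<open>D = \<Oplus>_n D_(n+1): component n lies in D_(n+1); A_n acts on it on the left,
  A_(n+1) on the right, all other A_i act by 0.\<close>
definition Dsum :: "(nat \<Rightarrow> ncel, nat \<Rightarrow> ncel, nat \<Rightarrow> ncel) bimod" where
  "Dsum = \<lparr>bcar = {d. (\<forall>n. d n \<in> bcar (Dmod n)) \<and> finite {n. d n \<noteq> bzero (Dmod n)}},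
           badd = (\<lambda>d e n. badd (Dmod n) (d n) (e n)),
           bzero = (\<lambda>n. bzero (Dmod n)),
           lact = (\<lambda>a d n. lact (Dmod n) (a n) (d n)),
           ract = (\<lambda>d a n. ract (Dmod n) (d n) (a (Suc n)))\<rparr>"

text \<open>I = \<Oplus>_n I_n: A_(n+1) acts on component n on the left, A_n on the right.\<close>
definition Isum :: "(nat \<Rightarrow> ncel, nat \<Rightarrow> ncel, nat \<Rightarrow> ncel) bimod" where
  "Isum = \<lparr>bcar = {i. (\<forall>n. i n \<in> bcar (Imod n)) \<and> finite {n. i n \<noteq> bzero (Imod n)}},
           badd = (\<lambda>i j n. badd (Imod n) (i n) (j n)),
           bzero = (\<lambda>n. bzero (Imod n)),
           lact = (\<lambda>a i n. lact (Imod n) (a (Suc n)) (i n)),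
           ract = (\<lambda>i a n. ract (Imod n) (i n) (a n))\<rparr>"

end

theory Submission
  imports Defs
begin

text \<open>
  A biadditive, R-balanced, equivariant map f from M \<times> N to a (P, S)-bimodule T induces an
  isomorphism M \<otimes>_R N \<cong> T as soon as f has a section \<sigma> such that every simple tensor
  m \<otimes> x equals \<sigma> (f (m, x)) and \<sigma> is additive modulo the tensor relations: then every
  tensor is of the form \<sigma> t.

  For D_(n+1) \<otimes> I_n take f (d, i) = t_(n+1)(d) i and \<sigma> a = 1 \<otimes> a. Since t_(n+1) \<circ> \<chi>_n = id,
  f is A_n-equivariant on the left, and d \<otimes> i = 1 \<cdot> d \<otimes> i = 1 \<otimes> t_(n+1)(d) i.
  For the direct sums the same works componentwise, except that the unit of D is not finitely
  supported: \<sigma> a uses instead the element of D that is 1 exactly on the support of a.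
\<close>

section \<open>Recognising tensor products\<close>

definition supp :: "('a \<Rightarrow> int) \<Rightarrow> 'a set" where
  "supp g = {x. g x \<noteq> 0}"

lemma supp_add_subset: "supp (\<lambda>z. g z + h z) \<subseteq> supp g \<union> supp h"
  by (auto simp: supp_def)

lemma supp_diff_subset: "supp (\<lambda>z. g z - h z) \<subseteq> supp g \<union> supp h"
  by (auto simp: supp_def)

lemma tker_uminus: "g \<in> tker R M N \<Longrightarrow> (\<lambda>z. - g z) \<in> tker R M N"
  using tker_diff[OF tker_zero, of g] by simp

lemma tker_add: "g \<in> tker R M N \<Longrightarrow> h \<in> tker R M N \<Longrightarrow> (\<lambda>z. g z + h z) \<in> tker R M N"
  using tker_diff[OF _ tker_uminus[of h], of g] by simp

lemma tker_cong: "g \<in> tker R M N \<Longrightarrow> (\<And>z. g z = h z) \<Longrightarrow> h \<in> tker R M N"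
  by (metis ext)

lemma tker_balanced:
  "m \<in> bcar M \<Longrightarrow> r \<in> R \<Longrightarrow> x \<in> bcar N \<Longrightarrow>
   (\<lambda>z. delta (ract M m r, x) z - delta (m, lact N r x) z) \<in> tker R M N"
  by (rule tker_gen) (auto simp: trels_def)

lemma tker_add_right:
  "m \<in> bcar M \<Longrightarrow> x \<in> bcar N \<Longrightarrow> x' \<in> bcar N \<Longrightarrow>
   (\<lambda>z. delta (m, badd N x x') z - delta (m, x) z - delta (m, x') z) \<in> tker R M N"
  by (rule tker_gen) (auto simp: trels_def)

locale tensor_factors =
  fixes R :: "'r set" and M :: "('p, 'r, 'm) bimod" and N :: "('r, 's, 'n) bimod"
  assumes M_add_closed: "m \<in> bcar M \<Longrightarrow> m' \<in> bcar M \<Longrightarrow> badd M m m' \<in> bcar M"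
    and N_add_closed: "x \<in> bcar N \<Longrightarrow> x' \<in> bcar N \<Longrightarrow> badd N x x' \<in> bcar N"
    and M_ract_closed: "m \<in> bcar M \<Longrightarrow> r \<in> R \<Longrightarrow> ract M m r \<in> bcar M"
    and N_lact_closed: "r \<in> R \<Longrightarrow> x \<in> bcar N \<Longrightarrow> lact N r x \<in> bcar N"
begin

abbreviation "F \<equiv> tfree M N"
abbreviation "K \<equiv> tker R M N"
abbreviation "tc \<equiv> tcls R M N"

lemma tfree_iff: "g \<in> F \<longleftrightarrow> finite (supp g) \<and> supp g \<subseteq> bcar M \<times> bcar N"
  by (simp add: tfree_def supp_def)

lemma delta_tfree: "y \<in> bcar M \<times> bcar N \<Longrightarrow> delta y \<in> F"
  unfolding tfree_iff supp_def delta_def by auto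

lemma tfree_zero: "(\<lambda>z. 0) \<in> F"
  unfolding tfree_iff supp_def by auto

lemma tfree_add: "g \<in> F \<Longrightarrow> h \<in> F \<Longrightarrow> (\<lambda>z. g z + h z) \<in> F"
  using supp_add_subset[of g h] unfolding tfree_iff by (meson finite_UnI finite_subset le_sup_iff order_trans)

lemma tfree_diff: "g \<in> F \<Longrightarrow> h \<in> F \<Longrightarrow> (\<lambda>z. g z - h z) \<in> F"
  using supp_diff_subset[of g h] unfolding tfree_iff by (meson finite_UnI finite_subset le_sup_iff order_trans)

lemma tker_tfree: "g \<in> K \<Longrightarrow> g \<in> F"
proof (induction rule: tker.induct)
  case (tker_gen g)
  then show ?case
    unfolding trels_def
    by (auto intro!: tfree_diff delta_tfree M_add_closed N_add_closed M_ract_closed N_lact_closed)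
qed (auto intro: tfree_zero tfree_diff)

lemma tfree_induct[consumes 1, case_names zero add_delta diff_delta]:
  assumes "g \<in> F" and zero: "Q (\<lambda>z. 0)"
    and add_delta: "\<And>g y. g \<in> F \<Longrightarrow> y \<in> bcar M \<times> bcar N \<Longrightarrow> Q g \<Longrightarrow> Q (\<lambda>z. g z + delta y z)"
    and diff_delta: "\<And>g y. g \<in> F \<Longrightarrow> y \<in> bcar M \<times> bcar N \<Longrightarrow> Q g \<Longrightarrow> Q (\<lambda>z. g z - delta y z)"
  shows "Q g"
proof -
  have "finite (supp g)" "supp g \<subseteq> bcar M \<times> bcar N"
    using \<open>g \<in> F\<close> by (auto simp: tfree_iff)
  then show ?thesis
  proof (induction "supp g" arbitrary: g rule: finite_induct)
    case empty
    then have "g = (\<lambda>z. 0)" by (auto simp: supp_def)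
    then show ?case using zero by simp
  next
    case (insert y A)
    define g0 where "g0 = g(y := 0)"
    have supp_g0: "supp g0 = A" using insert.hyps(2,4) by (auto simp: supp_def g0_def)
    have g0F: "g0 \<in> F" using insert supp_g0 by (auto simp: tfree_iff)
    have y: "y \<in> bcar M \<times> bcar N" using insert by blast
    have "(\<lambda>z. g0 z + k * delta y z) \<in> F \<and> Q (\<lambda>z. g0 z + k * delta y z)" for k :: int
    proof (induction k rule: int_induct[where k = 0])
      case base
      show ?case using g0F insert.hyps(3)[OF supp_g0[symmetric]] insert.prems supp_g0
        by (auto simp: tfree_iff)
    next
      case (step1 k)
      then have "(\<lambda>z. (g0 z + k * delta y z) + delta y z) \<in> F \<and> Q (\<lambda>z. (g0 z + k * delta y z) + delta y z)"
        using y by (auto intro: add_delta tfree_add delta_tfree)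
      then show ?case by (simp add: algebra_simps)
    next
      case (step2 k)
      then have "(\<lambda>z. (g0 z + k * delta y z) - delta y z) \<in> F \<and> Q (\<lambda>z. (g0 z + k * delta y z) - delta y z)"
        using y by (auto intro: diff_delta tfree_diff delta_tfree)
      then show ?case by (simp add: algebra_simps)
    qed
    moreover have "g = (\<lambda>z. g0 z + g y * delta y z)" by (auto simp: g0_def delta_def)
    ultimately show ?case by metis
  qed
qed

lemma tcls_self: "g \<in> F \<Longrightarrow> g \<in> tc g"
  unfolding tcls_def using tker_zero by simp

lemma rep_tcls: "g \<in> F \<Longrightarrow> rep (tc g) \<in> F \<and> (\<lambda>z. rep (tc g) z - g z) \<in> K"
proof -
  assume "g \<in> F"
  then have "rep (tc g) \<in> tc g" unfolding rep_def by (rule someI[of "\<lambda>x. x \<in> tc g", OF tcls_self])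
  then show ?thesis unfolding tcls_def by simp
qed

lemma tcls_eqI: "(\<lambda>z. g z - h z) \<in> K \<Longrightarrow> tc g = tc h"
proof -
  assume gh: "(\<lambda>z. g z - h z) \<in> K"
  have "(\<lambda>z. k z - h z) \<in> K" if "(\<lambda>z. k z - g z) \<in> K" for k
    using tker_add[OF that gh] by (rule tker_cong) simp
  moreover have "(\<lambda>z. k z - g z) \<in> K" if "(\<lambda>z. k z - h z) \<in> K" for k
    using tker_diff[OF that gh] by (rule tker_cong) simp
  ultimately show ?thesis unfolding tcls_def by blast
qed

lemma push_eq_sum: "finite A \<Longrightarrow> supp g \<subseteq> A \<Longrightarrow> push h g z = sum g {x \<in> A. h x = z}"
  unfolding push_def by (rule sum.mono_neutral_left) (auto simp: supp_def)

lemma push_add: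
  assumes "g \<in> F" "g' \<in> F"
  shows "push h (\<lambda>z. g z + g' z) = (\<lambda>z. push h g z + push h g' z)"
proof
  fix z
  let ?A = "supp g \<union> supp g'"
  have A: "finite ?A" using assms by (auto simp: tfree_iff)
  show "push h (\<lambda>z. g z + g' z) z = push h g z + push h g' z"
    unfolding push_eq_sum[OF A supp_add_subset] push_eq_sum[OF A Un_upper1]
      push_eq_sum[OF A Un_upper2]
    by (simp add: sum.distrib)
qed

lemma push_diff:
  assumes "g \<in> F" "g' \<in> F"
  shows "push h (\<lambda>z. g z - g' z) = (\<lambda>z. push h g z - push h g' z)"
proof
  fix z
  let ?A = "supp g \<union> supp g'"
  have A: "finite ?A" using assms by (auto simp: tfree_iff)
  show "push h (\<lambda>z. g z - g' z) z = push h g z - push h g' z"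
    unfolding push_eq_sum[OF A supp_diff_subset] push_eq_sum[OF A Un_upper1]
      push_eq_sum[OF A Un_upper2]
    by (simp add: sum_subtractf)
qed

lemma push_delta: "push h (delta y) = delta (h y)"
proof
  fix z
  have "{x. delta y x \<noteq> 0 \<and> h x = z} = (if h y = z then {y} else {})"
    by (auto simp: delta_def)
  then show "push h (delta y) z = delta (h y) z"
    by (simp add: push_def delta_def)
qed

lemma push_zero: "push h (\<lambda>z. 0) = (\<lambda>z. 0)"
  by (simp add: push_def)

lemma push_tfree:
  assumes h: "h ` (bcar M \<times> bcar N) \<subseteq> bcar M \<times> bcar N" and "g \<in> F"
  shows "push h g \<in> F"
proof -
  have "supp (push h g) \<subseteq> h ` supp g"
  proof
    fix z assume "z \<in> supp (push h g)"
    then have "{x. g x \<noteq> 0 \<and> h x = z} \<noteq> {}" unfolding supp_def push_def by force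
    then show "z \<in> h ` supp g" by (auto simp: supp_def)
  qed
  moreover have "finite (supp g)" "supp g \<subseteq> bcar M \<times> bcar N"
    using \<open>g \<in> F\<close> by (auto simp: tfree_iff)
  ultimately show ?thesis
    using h unfolding tfree_iff by (meson finite_imageI finite_subset image_mono order_trans)
qed

end

locale tensor_recognition = tensor_factors R M N + abelian_group G
  for R :: "'r set" and M :: "('p, 'r, 'm) bimod" and N :: "('r, 's, 'n) bimod"
    and G :: "('t, 'b) ring_scheme" (structure) +
  fixes P :: "'p set" and S :: "'s set" and T :: "('p, 's, 't) bimod"
    and f :: "'m \<times> 'n \<Rightarrow> 't" and \<sigma> :: "'t \<Rightarrow> 'm \<times> 'n"
  assumes T_carrier: "bcar T = carrier G" and T_add: "badd T = add G"
    and M_lact_closed: "p \<in> P \<Longrightarrow> m \<in> bcar M \<Longrightarrow> lact M p m \<in> bcar M"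
    and N_ract_closed: "x \<in> bcar N \<Longrightarrow> s \<in> S \<Longrightarrow> ract N x s \<in> bcar N"
    and T_lact_closed: "p \<in> P \<Longrightarrow> t \<in> carrier G \<Longrightarrow> lact T p t \<in> carrier G"
    and T_ract_closed: "s \<in> S \<Longrightarrow> t \<in> carrier G \<Longrightarrow> ract T t s \<in> carrier G"
    and T_lact_add: "p \<in> P \<Longrightarrow> t \<in> carrier G \<Longrightarrow> t' \<in> carrier G \<Longrightarrow>
      lact T p (t \<oplus> t') = lact T p t \<oplus> lact T p t'"
    and T_ract_add: "s \<in> S \<Longrightarrow> t \<in> carrier G \<Longrightarrow> t' \<in> carrier G \<Longrightarrow>
      ract T (t \<oplus> t') s = ract T t s \<oplus> ract T t' s"
    and f_closed: "m \<in> bcar M \<Longrightarrow> x \<in> bcar N \<Longrightarrow> f (m, x) \<in> carrier G"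
    and f_add_left: "m \<in> bcar M \<Longrightarrow> m' \<in> bcar M \<Longrightarrow> x \<in> bcar N \<Longrightarrow>
      f (badd M m m', x) = f (m, x) \<oplus> f (m', x)"
    and f_add_right: "m \<in> bcar M \<Longrightarrow> x \<in> bcar N \<Longrightarrow> x' \<in> bcar N \<Longrightarrow>
      f (m, badd N x x') = f (m, x) \<oplus> f (m, x')"
    and f_balanced: "m \<in> bcar M \<Longrightarrow> r \<in> R \<Longrightarrow> x \<in> bcar N \<Longrightarrow>
      f (ract M m r, x) = f (m, lact N r x)"
    and f_lact: "p \<in> P \<Longrightarrow> m \<in> bcar M \<Longrightarrow> x \<in> bcar N \<Longrightarrow> f (lact M p m, x) = lact T p (f (m, x))"
    and f_ract: "s \<in> S \<Longrightarrow> m \<in> bcar M \<Longrightarrow> x \<in> bcar N \<Longrightarrow> f (m, ract N x s) = ract T (f (m, x)) s"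
    and \<sigma>_closed: "t \<in> carrier G \<Longrightarrow> \<sigma> t \<in> bcar M \<times> bcar N"
    and f_\<sigma>: "t \<in> carrier G \<Longrightarrow> f (\<sigma> t) = t"
    and delta_equiv_\<sigma>: "m \<in> bcar M \<Longrightarrow> x \<in> bcar N \<Longrightarrow>
      (\<lambda>z. delta (m, x) z - delta (\<sigma> (f (m, x))) z) \<in> tker R M N"
    and \<sigma>_add_equiv: "t \<in> carrier G \<Longrightarrow> t' \<in> carrier G \<Longrightarrow>
      (\<lambda>z. delta (\<sigma> (t \<oplus> t')) z - delta (\<sigma> t) z - delta (\<sigma> t') z) \<in> tker R M N"
begin

lemma f_closed_pair: "y \<in> bcar M \<times> bcar N \<Longrightarrow> f y \<in> carrier G"
  using f_closed by (cases y) auto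

definition lift :: "('m \<times> 'n \<Rightarrow> int) \<Rightarrow> 't" where
  "lift g = (\<Oplus>z\<in>supp g. add_pow G (g z) (f z))"

lemma lift_eq_finsum:
  assumes "finite A" "supp g \<subseteq> A" "A \<subseteq> bcar M \<times> bcar N"
  shows "lift g = (\<Oplus>z\<in>A. add_pow G (g z) (f z))"
proof -
  have "add_pow G (g z) (f z) = \<zero>" if "z \<in> A - supp g" for z
    using that by (simp add: supp_def add_pow_def)
  then show ?thesis
    unfolding lift_def using assms
    by (intro add.finprod_mono_neutral_cong_left) (auto intro!: f_closed_pair)
qed

lemma lift_closed: "g \<in> F \<Longrightarrow> lift g \<in> carrier G"
  unfolding lift_def tfree_iff by (auto intro!: finsum_closed f_closed_pair)

lemma lift_zero: "lift (\<lambda>z. 0) = \<zero>"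
  by (simp add: lift_def supp_def)

lemma lift_add: "g \<in> F \<Longrightarrow> h \<in> F \<Longrightarrow> lift (\<lambda>z. g z + h z) = lift g \<oplus> lift h"
proof -
  assume "g \<in> F" "h \<in> F"
  define A where "A = supp g \<union> supp h"
  have A: "finite A" "A \<subseteq> bcar M \<times> bcar N" using \<open>g \<in> F\<close> \<open>h \<in> F\<close> by (auto simp: A_def tfree_iff)
  have "supp (\<lambda>z. g z + h z) \<subseteq> A" unfolding A_def by (rule supp_add_subset)
  then have "lift (\<lambda>z. g z + h z) = (\<Oplus>z\<in>A. add_pow G (g z + h z) (f z))"
    by (rule lift_eq_finsum[OF A(1) _ A(2)])
  also have "\<dots> = (\<Oplus>z\<in>A. add_pow G (g z) (f z) \<oplus> add_pow G (h z) (f z))"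
    by (rule finsum_cong') (use A in \<open>auto intro!: add.int_pow_mult f_closed_pair\<close>)
  also have "\<dots> = (\<Oplus>z\<in>A. add_pow G (g z) (f z)) \<oplus> (\<Oplus>z\<in>A. add_pow G (h z) (f z))"
    by (rule finsum_addf) (use A in \<open>auto intro!: f_closed_pair\<close>)
  also have "\<dots> = lift g \<oplus> lift h"
    using lift_eq_finsum[OF A(1) _ A(2)] by (simp add: A_def)
  finally show ?thesis .
qed

lemma lift_diff: "g \<in> F \<Longrightarrow> h \<in> F \<Longrightarrow> lift (\<lambda>z. g z - h z) = lift g \<ominus> lift h"
proof -
  assume "g \<in> F" "h \<in> F"
  then have "lift g = lift (\<lambda>z. g z - h z) \<oplus> lift h"
    using lift_add[of "\<lambda>z. g z - h z" h] by (simp add: tfree_diff)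
  then show ?thesis using \<open>g \<in> F\<close> \<open>h \<in> F\<close>
    by (simp add: minus_eq add.inv_solve_right lift_closed tfree_diff)
qed

lemma lift_delta: "y \<in> bcar M \<times> bcar N \<Longrightarrow> lift (delta y) = f y"
proof -
  assume y: "y \<in> bcar M \<times> bcar N"
  have "supp (delta y) = {y}" by (auto simp: supp_def delta_def)
  then show ?thesis
    using f_closed_pair[OF y] by (simp add: lift_def delta_def)
qed

lemma lift_trels: "g \<in> trels R M N \<Longrightarrow> lift g = \<zero>"
proof -
  assume "g \<in> trels R M N"
  then consider (add_left) m m' x where "m \<in> bcar M" "m' \<in> bcar M" "x \<in> bcar N"
      "g = (\<lambda>y. delta (badd M m m', x) y - delta (m, x) y - delta (m', x) y)"
    | (add_right) m x x' where "m \<in> bcar M" "x \<in> bcar N" "x' \<in> bcar N"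
      "g = (\<lambda>y. delta (m, badd N x x') y - delta (m, x) y - delta (m, x') y)"
    | (balanced) m r x where "m \<in> bcar M" "r \<in> R" "x \<in> bcar N"
      "g = (\<lambda>y. delta (ract M m r, x) y - delta (m, lact N r x) y)"
    unfolding trels_def by blast
  then show ?thesis
  proof cases
    case add_left
    then show ?thesis using f_closed
      by (simp add: lift_diff lift_delta tfree_diff delta_tfree M_add_closed f_add_left
          minus_eq minus_add a_assoc r_neg a_lcomm)
  next
    case add_right
    then show ?thesis using f_closed
      by (simp add: lift_diff lift_delta tfree_diff delta_tfree N_add_closed f_add_right
          minus_eq minus_add a_assoc r_neg a_lcomm)
  next
    case balanced
    then show ?thesis using f_closed
      by (simp add: lift_diff lift_delta delta_tfree M_ract_closed N_lact_closed f_balanced r_neg minus_eq)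
  qed
qed

lemma lift_tker: "g \<in> K \<Longrightarrow> lift g = \<zero>"
  by (induction rule: tker.induct) (simp_all add: lift_trels lift_zero lift_diff tker_tfree minus_eq)

lemma tfree_equiv_\<sigma>_lift: "g \<in> F \<Longrightarrow> (\<lambda>z. g z - delta (\<sigma> (lift g)) z) \<in> K"
proof (induction rule: tfree_induct)
  case zero
  have "(\<lambda>z. delta (\<sigma> (\<zero> \<oplus> \<zero>)) z - delta (\<sigma> \<zero>) z - delta (\<sigma> \<zero>) z) \<in> K"
    by (rule \<sigma>_add_equiv) auto
  then show ?case by (rule tker_cong) (simp add: lift_zero)
next
  case (add_delta g y)
  have Lg: "lift g \<in> carrier G" and fy: "f y \<in> carrier G"
    using add_delta lift_closed f_closed_pair by auto
  have e: "lift (\<lambda>z. g z + delta y z) = lift g \<oplus> f y"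
    using add_delta by (simp add: lift_add delta_tfree lift_delta)
  have y: "(\<lambda>z. delta y z - delta (\<sigma> (f y)) z) \<in> K"
    using delta_equiv_\<sigma> add_delta(2) by (cases y) auto
  have "(\<lambda>z. ((g z - delta (\<sigma> (lift g)) z) + (delta y z - delta (\<sigma> (f y)) z))
       - (delta (\<sigma> (lift g \<oplus> f y)) z - delta (\<sigma> (lift g)) z - delta (\<sigma> (f y)) z)) \<in> K"
    by (intro tker_diff tker_add add_delta y \<sigma>_add_equiv Lg fy)
  then show ?case by (rule tker_cong) (simp add: e)
next
  case (diff_delta g y)
  have Lg: "lift g \<in> carrier G" and fy: "f y \<in> carrier G"
    using diff_delta lift_closed f_closed_pair by auto
  define u where "u = lift g \<ominus> f y"
  have u: "u \<in> carrier G" using Lg fy by (simp add: u_def)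
  have Lg_u: "lift g = u \<oplus> f y" using Lg fy by (simp add: u_def minus_eq a_assoc l_neg)
  have e: "lift (\<lambda>z. g z - delta y z) = u"
    using diff_delta by (simp add: lift_diff delta_tfree lift_delta u_def)
  have y: "(\<lambda>z. delta y z - delta (\<sigma> (f y)) z) \<in> K"
    using delta_equiv_\<sigma> diff_delta(2) by (cases y) auto
  have "(\<lambda>z. ((g z - delta (\<sigma> (lift g)) z) - (delta y z - delta (\<sigma> (f y)) z))
       + (delta (\<sigma> (u \<oplus> f y)) z - delta (\<sigma> u) z - delta (\<sigma> (f y)) z)) \<in> K"
    by (intro tker_diff tker_add diff_delta y \<sigma>_add_equiv u fy)
  then show ?case by (rule tker_cong) (simp add: e Lg_u)
qed

lemma lift_rep_tcls: "g \<in> F \<Longrightarrow> lift (rep (tc g)) = lift g"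
proof -
  assume g: "g \<in> F"
  from rep_tcls[OF g] have r: "rep (tc g) \<in> F" and k: "(\<lambda>z. rep (tc g) z - g z) \<in> K" by auto
  have "lift (rep (tc g)) \<ominus> lift g = \<zero>" using lift_tker[OF k] lift_diff[OF r g] by simp
  then show ?thesis using lift_closed[OF r] lift_closed[OF g]
    by (simp add: minus_eq add.inv_solve_right')
qed

lemma lift_push:
  assumes h: "h ` (bcar M \<times> bcar N) \<subseteq> bcar M \<times> bcar N"
    and act_closed: "\<And>t. t \<in> carrier G \<Longrightarrow> act t \<in> carrier G"
    and act_add: "\<And>t t'. t \<in> carrier G \<Longrightarrow> t' \<in> carrier G \<Longrightarrow> act (t \<oplus> t') = act t \<oplus> act t'"
    and f_h: "\<And>y. y \<in> bcar M \<times> bcar N \<Longrightarrow> f (h y) = act (f y)"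
    and "g \<in> F"
  shows "lift (push h g) = act (lift g)"
proof -
  have act_diff: "act (a \<ominus> b) = act a \<ominus> act b" if "a \<in> carrier G" "b \<in> carrier G" for a b
  proof -
    have "act a = act (a \<ominus> b) \<oplus> act b"
      using that act_add[of "a \<ominus> b" b] by (simp add: minus_eq a_assoc l_neg)
    then show ?thesis using that by (simp add: minus_eq add.inv_solve_right act_closed)
  qed
  then have act_zero: "act \<zero> = \<zero>"
    using act_closed[of \<zero>] by (metis zero_closed r_neg minus_eq)
  show ?thesis using \<open>g \<in> F\<close>
  proof (induction rule: tfree_induct)
    case zero
    then show ?case by (simp add: push_zero lift_zero act_zero)
  next
    case (add_delta g y)
    have "h y \<in> bcar M \<times> bcar N" using h add_delta(2) by blast
    then show ?case using push_tfree[OF h add_delta(1)] add_delta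
      by (simp add: push_add delta_tfree push_delta lift_add lift_delta f_h act_add lift_closed f_closed_pair)
  next
    case (diff_delta g y)
    have "h y \<in> bcar M \<times> bcar N" using h diff_delta(2) by blast
    then show ?case using push_tfree[OF h diff_delta(1)] diff_delta
      by (simp add: push_diff delta_tfree push_delta lift_diff lift_delta f_h act_diff lift_closed f_closed_pair)
  qed
qed

theorem tensor_iso: "bimod_iso P S (tensor R M N) T (\<lambda>C. lift (rep C))"
proof -
  let ?\<Phi> = "\<lambda>C. lift (rep C)"
  have \<Phi>_tc: "?\<Phi> (tc g) = lift g" if "g \<in> F" for g
    using lift_rep_tcls[OF that] .
  have "inj_on ?\<Phi> (tc ` F)"
  proof (rule inj_onI)
    fix C D assume "C \<in> tc ` F" "D \<in> tc ` F" and eq: "?\<Phi> C = ?\<Phi> D"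
    then obtain g h where g: "g \<in> F" "C = tc g" and h: "h \<in> F" "D = tc h" by blast
    have "lift g = lift h" using eq g h \<Phi>_tc by simp
    moreover have "(\<lambda>z. (g z - delta (\<sigma> (lift g)) z) - (h z - delta (\<sigma> (lift h)) z)) \<in> K"
      by (intro tker_diff tfree_equiv_\<sigma>_lift g h)
    ultimately have "(\<lambda>z. g z - h z) \<in> K" by (rule_tac tker_cong) simp_all
    then show "C = D" using g h tcls_eqI by simp
  qed
  moreover have "carrier G \<subseteq> ?\<Phi> ` tc ` F"
  proof
    fix t assume t: "t \<in> carrier G"
    have "delta (\<sigma> t) \<in> F" using delta_tfree[OF \<sigma>_closed[OF t]] .
    moreover have "?\<Phi> (tc (delta (\<sigma> t))) = t"
      using \<Phi>_tc[OF calculation] lift_delta[OF \<sigma>_closed[OF t]] f_\<sigma>[OF t] by simp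
    ultimately show "t \<in> ?\<Phi> ` tc ` F" by (metis image_eqI)
  qed
  moreover have "?\<Phi> ` tc ` F \<subseteq> carrier G" using \<Phi>_tc lift_closed by auto
  ultimately have bij: "bij_betw ?\<Phi> (tc ` F) (carrier G)"
    by (auto intro: bij_betw_imageI)
  have rep_F: "rep C \<in> F" if C: "C \<in> bcar (tensor R M N)" for C
  proof -
    obtain g where "g \<in> F" "C = tc g" using C by (auto simp: tensor_def)
    then show ?thesis using rep_tcls by simp
  qed
  show ?thesis
    unfolding bimod_iso_def
  proof (intro conjI ballI)
    show "bij_betw ?\<Phi> (bcar (tensor R M N)) (bcar T)"
      using bij by (simp add: tensor_def T_carrier)
  next
    fix C D assume "C \<in> bcar (tensor R M N)" "D \<in> bcar (tensor R M N)"
    then show "?\<Phi> (badd (tensor R M N) C D) = badd T (?\<Phi> C) (?\<Phi> D)"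
      using rep_F by (simp add: tensor_def T_add \<Phi>_tc tfree_add lift_add)
  next
    fix p C assume p: "p \<in> P" and C: "C \<in> bcar (tensor R M N)"
    let ?h = "\<lambda>(m, x). (lact M p m, x)"
    have h: "?h ` (bcar M \<times> bcar N) \<subseteq> bcar M \<times> bcar N" using M_lact_closed p by auto
    have "lift (push ?h (rep C)) = lact T p (lift (rep C))"
      by (rule lift_push[OF h _ _ _ rep_F[OF C]]) (use p f_lact T_lact_closed T_lact_add in auto)
    then show "?\<Phi> (lact (tensor R M N) p C) = lact T p (?\<Phi> C)"
      using push_tfree[OF h rep_F[OF C]] by (simp add: tensor_def \<Phi>_tc)
  next
    fix s C assume s: "s \<in> S" and C: "C \<in> bcar (tensor R M N)"
    let ?h = "\<lambda>(m, x). (m, ract N x s)"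
    have h: "?h ` (bcar M \<times> bcar N) \<subseteq> bcar M \<times> bcar N" using N_ract_closed s by auto
    have "lift (push ?h (rep C)) = ract T (lift (rep C)) s"
      by (rule lift_push[OF h _ _ _ rep_F[OF C]]) (use s f_ract T_ract_closed T_ract_add in auto)
    then show "?\<Phi> (ract (tensor R M N) C s) = ract T (?\<Phi> C) s"
      using push_tfree[OF h rep_F[OF C]] by (simp add: tensor_def \<Phi>_tc)
  qed
qed

end

section \<open>The nilCoxeter algebras\<close>

lemma FA_simps[simp]: "mult (FA k) = nc_mult" "one (FA k) = nc_one" "zero (FA k) = (\<lambda>w. 0)"
  "add (FA k) = (\<lambda>f g w. f w + g w)"
  by (simp_all add: FA_def)

lemma carrier_FA: "f \<in> carrier (FA k) \<longleftrightarrow> finite {w. f w \<noteq> 0} \<and> (\<forall>w. f w \<noteq> 0 \<longrightarrow> set w \<subseteq> {1..<k})"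
  by (simp add: FA_def)

lemma nc_mult_assoc: "nc_mult (nc_mult f g) h = nc_mult f (nc_mult g h)"
proof (rule ext)
  fix w :: "nat list"
  define L where "L = length w"
  define G where "G j k = f (take j w) * g (take (k - j) (drop j w)) * h (drop k w)" for j k
  have "nc_mult (nc_mult f g) h w = (\<Sum>k\<le>L. \<Sum>j\<le>k. G j k)"
    unfolding nc_mult_def G_def L_def
    by (auto simp: sum_distrib_right min_def drop_take intro!: sum.cong)
  also have "\<dots> = (\<Sum>k\<le>L. \<Sum>j\<in>{j\<in>{..L}. j \<le> k}. G j k)"
    by (rule sum.cong) (auto intro!: sum.cong)
  also have "\<dots> = (\<Sum>j\<le>L. \<Sum>k\<in>{k\<in>{..L}. j \<le> k}. G j k)"
    by (rule sum.swap_restrict) auto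
  also have "\<dots> = (\<Sum>j\<le>L. \<Sum>i\<le>L - j. G j (j + i))"
  proof (rule sum.cong[OF refl])
    fix j assume "j \<in> {..L}"
    show "(\<Sum>k\<in>{k\<in>{..L}. j \<le> k}. G j k) = (\<Sum>i\<le>L - j. G j (j + i))"
      by (rule sum.reindex_bij_witness[where i="\<lambda>i. j + i" and j="\<lambda>k. k - j"]) (use \<open>j \<in> {..L}\<close> in auto)
  qed
  also have "\<dots> = nc_mult f (nc_mult g h) w"
    unfolding nc_mult_def G_def L_def
    by (auto simp: sum_distrib_left mult.assoc add.commute intro!: sum.cong)
  finally show "nc_mult (nc_mult f g) h w = nc_mult f (nc_mult g h) w" .
qed

lemma nc_mult_one_left: "nc_mult nc_one f = f"
proof
  fix w :: "nat list"
  have "nc_mult nc_one f w = (\<Sum>k\<in>{..length w}. if k = 0 then f w else 0)"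
    unfolding nc_mult_def nc_one_def by (rule sum.cong) auto
  then show "nc_mult nc_one f w = f w" by simp
qed

lemma nc_mult_one_right: "nc_mult f nc_one = f"
proof
  fix w :: "nat list"
  have "nc_mult f nc_one w = (\<Sum>k\<in>{..length w}. if k = length w then f w else 0)"
    unfolding nc_mult_def nc_one_def by (rule sum.cong) auto
  then show "nc_mult f nc_one w = f w" by simp
qed

lemma nc_mult_add_left: "nc_mult (\<lambda>w. f w + g w) h = (\<lambda>w. nc_mult f h w + nc_mult g h w)"
  unfolding nc_mult_def by (auto simp: distrib_right sum.distrib)

lemma nc_mult_add_right: "nc_mult h (\<lambda>w. f w + g w) = (\<lambda>w. nc_mult h f w + nc_mult h g w)"
  unfolding nc_mult_def by (auto simp: distrib_left sum.distrib)

lemma nc_mult_nonzero: "nc_mult f g w \<noteq> 0 \<Longrightarrow> \<exists>k. f (take k w) \<noteq> 0 \<and> g (drop k w) \<noteq> 0"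
  unfolding nc_mult_def by (metis (no_types, lifting) mult_eq_0_iff sum.neutral)

lemma nc_mult_closed: "f \<in> carrier (FA k) \<Longrightarrow> g \<in> carrier (FA k) \<Longrightarrow> nc_mult f g \<in> carrier (FA k)"
proof -
  assume f: "f \<in> carrier (FA k)" and g: "g \<in> carrier (FA k)"
  have "{w. nc_mult f g w \<noteq> 0} \<subseteq> (\<lambda>(u, v). u @ v) ` ({w. f w \<noteq> 0} \<times> {w. g w \<noteq> 0})"
  proof
    fix w assume "w \<in> {w. nc_mult f g w \<noteq> 0}"
    then obtain j where "f (take j w) \<noteq> 0" "g (drop j w) \<noteq> 0" using nc_mult_nonzero[of f g w] by auto
    then show "w \<in> (\<lambda>(u, v). u @ v) ` ({w. f w \<noteq> 0} \<times> {w. g w \<noteq> 0})"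
      by (intro image_eqI[of _ _ "(take j w, drop j w)"]) auto
  qed
  moreover have "finite ((\<lambda>(u, v). u @ v) ` ({w. f w \<noteq> 0} \<times> {w. g w \<noteq> 0}))"
    using f g by (auto simp: carrier_FA)
  moreover have "set w \<subseteq> {1..<k}" if nz: "nc_mult f g w \<noteq> 0" for w
  proof -
    obtain j where "f (take j w) \<noteq> 0" "g (drop j w) \<noteq> 0" using nc_mult_nonzero[OF nz] by blast
    then have "set (take j w) \<subseteq> {1..<k}" "set (drop j w) \<subseteq> {1..<k}" using f g by (auto simp: carrier_FA)
    then show ?thesis by (metis append_take_drop_id set_append Un_subset_iff)
  qed
  ultimately show ?thesis by (auto simp: carrier_FA intro: finite_subset)
qed

lemma FA_abelian: "abelian_group (FA k)"
proof (rule abelian_groupI)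
  fix x y assume "x \<in> carrier (FA k)" "y \<in> carrier (FA k)"
  moreover have "{w. x w + y w \<noteq> 0} \<subseteq> {w. x w \<noteq> 0} \<union> {w. y w \<noteq> 0}" by auto
  ultimately show "x \<oplus>\<^bsub>FA k\<^esub> y \<in> carrier (FA k)"
    by (auto simp: carrier_FA intro: finite_subset)
next
  show "\<zero>\<^bsub>FA k\<^esub> \<in> carrier (FA k)" by (simp add: carrier_FA)
next
  fix x assume x: "x \<in> carrier (FA k)"
  show "\<exists>y\<in>carrier (FA k). y \<oplus>\<^bsub>FA k\<^esub> x = \<zero>\<^bsub>FA k\<^esub>"
    by (rule bexI[of _ "\<lambda>w. - x w"]) (use x in \<open>auto simp: carrier_FA\<close>)
qed (auto simp: add.assoc add.commute)

lemma FA_ring: "ring (FA k)"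
proof (rule ringI)
  show "abelian_group (FA k)" by (rule FA_abelian)
  show "monoid (FA k)"
  proof (rule monoidI)
    show "\<one>\<^bsub>FA k\<^esub> \<in> carrier (FA k)" by (auto simp: carrier_FA nc_one_def)
  qed (auto simp: nc_mult_closed nc_mult_assoc nc_mult_one_left nc_mult_one_right)
qed (auto simp: nc_mult_add_left nc_mult_add_right)

lemma carrier_FA_mono: "f \<in> carrier (FA n) \<Longrightarrow> f \<in> carrier (FA (Suc n))"
proof -
  have "{1..<n} \<subseteq> {1..<Suc n}" by auto
  then show "f \<in> carrier (FA n) \<Longrightarrow> f \<in> carrier (FA (Suc n))" unfolding carrier_FA by blast
qed

lemma a_inv_FA: "x \<in> carrier (FA k) \<Longrightarrow> \<ominus>\<^bsub>FA k\<^esub> x = (\<lambda>w. - x w)"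
proof -
  assume x: "x \<in> carrier (FA k)"
  interpret abelian_group "FA k" by (rule FA_abelian)
  have c: "(\<lambda>w. - x w) \<in> carrier (FA k)" using x by (auto simp: carrier_FA)
  show ?thesis by (rule minus_equality) (use x c in auto)
qed

lemma a_minus_FA: "x \<in> carrier (FA k) \<Longrightarrow> y \<in> carrier (FA k) \<Longrightarrow> x \<ominus>\<^bsub>FA k\<^esub> y = (\<lambda>w. x w - y w)"
  by (simp add: a_minus_def a_inv_FA)

lemma nc_gen_closed: "i \<in> {1..<k} \<Longrightarrow> nc_gen i \<in> carrier (FA k)"
  by (auto simp: carrier_FA nc_gen_def)

lemma nc_diff_closed: "f \<in> carrier (FA k) \<Longrightarrow> g \<in> carrier (FA k) \<Longrightarrow> nc_diff f g \<in> carrier (FA k)"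
proof -
  assume f: "f \<in> carrier (FA k)" and g: "g \<in> carrier (FA k)"
  have "{w. nc_diff f g w \<noteq> 0} \<subseteq> {w. f w \<noteq> 0} \<union> {w. g w \<noteq> 0}" by (auto simp: nc_diff_def)
  with f g show ?thesis by (auto simp: carrier_FA nc_diff_def intro: finite_subset)
qed

lemma nilcox_rels_closed: "nilcox_rels k \<subseteq> carrier (FA k)"
  unfolding nilcox_rels_def by (auto intro!: nc_mult_closed nc_gen_closed nc_diff_closed)

lemma ideal_nilcox_ideal: "ideal (nilcox_ideal k) (FA k)"
  unfolding nilcox_ideal_def by (rule ring.genideal_ideal[OF FA_ring nilcox_rels_closed])

lemma NC_ring: "ring (NC k)"
  unfolding NC_def by (rule ideal.quotient_is_ring[OF ideal_nilcox_ideal])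

lemma NC_simps: "carrier (NC k) = a_rcosets\<^bsub>FA k\<^esub> (nilcox_ideal k)"
  "mult (NC k) = rcoset_mult (FA k) (nilcox_ideal k)"
  "one (NC k) = nilcox_ideal k +>\<^bsub>FA k\<^esub> nc_one"
  "zero (NC k) = nilcox_ideal k"
  "add (NC k) = set_add (FA k)"
  by (simp_all add: NC_def FactRing_def)

lemma carrier_NC_cosetE: "C \<in> carrier (NC k) \<Longrightarrow> \<exists>x\<in>carrier (FA k). C = nilcox_ideal k +>\<^bsub>FA k\<^esub> x"
  by (auto simp: NC_simps A_RCOSETS_def RCOSETS_def a_r_coset_def)

lemma coset_in_carrier_NC: "x \<in> carrier (FA k) \<Longrightarrow> nilcox_ideal k +>\<^bsub>FA k\<^esub> x \<in> carrier (NC k)"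
  by (auto simp: NC_simps A_RCOSETS_def RCOSETS_def a_r_coset_def)

lemma add_NC_coset: "x \<in> carrier (FA k) \<Longrightarrow> y \<in> carrier (FA k) \<Longrightarrow>
  (nilcox_ideal k +>\<^bsub>FA k\<^esub> x) \<oplus>\<^bsub>NC k\<^esub> (nilcox_ideal k +>\<^bsub>FA k\<^esub> y) = nilcox_ideal k +>\<^bsub>FA k\<^esub> (\<lambda>w. x w + y w)"
  using ideal.a_rcos_sum[OF ideal_nilcox_ideal, of x k y] by (simp add: NC_simps)

lemma mult_NC_coset: "x \<in> carrier (FA k) \<Longrightarrow> y \<in> carrier (FA k) \<Longrightarrow>
  (nilcox_ideal k +>\<^bsub>FA k\<^esub> x) \<otimes>\<^bsub>NC k\<^esub> (nilcox_ideal k +>\<^bsub>FA k\<^esub> y) = nilcox_ideal k +>\<^bsub>FA k\<^esub> (nc_mult x y)"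
  using ideal.rcoset_mult_add[OF ideal_nilcox_ideal, of x k y] by (simp add: NC_simps)

lemma (in ideal) rep_a_rcos: "x \<in> carrier R \<Longrightarrow> rep (I +> x) \<in> I +> x"
  unfolding rep_def by (rule someI[of "\<lambda>y. y \<in> I +> x"], rule a_rcos_self)

lemma rep_carrier_NC:
  assumes "C \<in> carrier (NC k)"
  shows "rep C \<in> carrier (FA k) \<and> C = nilcox_ideal k +>\<^bsub>FA k\<^esub> rep C"
proof -
  interpret ideal "nilcox_ideal k" "FA k" by (rule ideal_nilcox_ideal)
  obtain x where x: "x \<in> carrier (FA k)" "C = nilcox_ideal k +>\<^bsub>FA k\<^esub> x"
    using carrier_NC_cosetE[OF assms] by blast
  have "rep C \<in> nilcox_ideal k +>\<^bsub>FA k\<^esub> x" using rep_a_rcos[OF x(1)] x(2) by simp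
  then show ?thesis using a_repr_independence'[OF _ x(1)] a_elemrcos_carrier[OF x(1)] x(2) by simp
qed

lemma kill_letter_closed: "f \<in> carrier (FA (Suc n)) \<Longrightarrow> kill_letter n f \<in> carrier (FA n)"
proof -
  assume f: "f \<in> carrier (FA (Suc n))"
  have "{w. kill_letter n f w \<noteq> 0} \<subseteq> {w. f w \<noteq> 0}" by (auto simp: kill_letter_def)
  moreover have "set w \<subseteq> {1..<n}" if "kill_letter n f w \<noteq> 0" for w
  proof -
    have "n \<notin> set w" "f w \<noteq> 0" using that by (auto simp: kill_letter_def split: if_splits)
    moreover have "set w \<subseteq> {1..<Suc n}" using f \<open>f w \<noteq> 0\<close> by (auto simp: carrier_FA)
    ultimately show ?thesis by (auto simp: less_Suc_eq)
  qed
  ultimately show ?thesis using f by (auto simp: carrier_FA intro: finite_subset)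
qed

lemma kill_letter_id: "f \<in> carrier (FA n) \<Longrightarrow> kill_letter n f = f"
proof
  fix w assume f: "f \<in> carrier (FA n)"
  show "kill_letter n f w = f w"
  proof (cases "n \<in> set w")
    case True
    have "f w = 0"
    proof (rule ccontr)
      assume "f w \<noteq> 0"
      then have "set w \<subseteq> {1..<n}" using f by (auto simp: carrier_FA)
      then show False using True by auto
    qed
    then show ?thesis by (simp add: kill_letter_def)
  qed (simp add: kill_letter_def)
qed

lemma kill_letter_mult: "kill_letter n (nc_mult f g) = nc_mult (kill_letter n f) (kill_letter n g)"
proof
  fix w :: "nat list"
  show "kill_letter n (nc_mult f g) w = nc_mult (kill_letter n f) (kill_letter n g) w"
  proof (cases "n \<in> set w")
    case True
    have "nc_mult (kill_letter n f) (kill_letter n g) w = 0"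
      unfolding nc_mult_def
    proof (rule sum.neutral, rule ballI)
      fix k
      have "n \<in> set (take k w) \<or> n \<in> set (drop k w)"
        using True by (metis Un_iff append_take_drop_id set_append)
      then show "kill_letter n f (take k w) * kill_letter n g (drop k w) = 0"
        by (auto simp: kill_letter_def)
    qed
    then show ?thesis using True by (simp add: kill_letter_def)
  next
    case False
    then have "n \<notin> set (take k w)" "n \<notin> set (drop k w)" for k
      by (meson in_set_takeD in_set_dropD)+
    then show ?thesis using False by (simp add: kill_letter_def nc_mult_def)
  qed
qed

lemma kill_letter_add: "kill_letter n (\<lambda>w. f w + g w) = (\<lambda>w. kill_letter n f w + kill_letter n g w)"
  by (auto simp: kill_letter_def)

lemma kill_letter_one: "kill_letter n nc_one = nc_one"
  by (auto simp: kill_letter_def nc_one_def)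

lemma kill_letter_gen: "kill_letter n (nc_gen i) = (if i = n then (\<lambda>w. 0) else nc_gen i)"
  by (auto simp: kill_letter_def nc_gen_def)

lemma kill_letter_diff: "kill_letter n (nc_diff f g) = nc_diff (kill_letter n f) (kill_letter n g)"
  by (auto simp: kill_letter_def nc_diff_def)

lemma nc_mult_zero_left: "nc_mult (\<lambda>w. 0) g = (\<lambda>w. 0)" by (simp add: nc_mult_def)
lemma nc_mult_zero_right: "nc_mult f (\<lambda>w. 0) = (\<lambda>w. 0)" by (simp add: nc_mult_def)
lemma nc_diff_zero: "nc_diff (\<lambda>w. 0) (\<lambda>w. 0) = (\<lambda>w. 0)" by (simp add: nc_diff_def)

lemma kill_letter_hom: "ring_hom_ring (FA (Suc n)) (FA n) (kill_letter n)"
  by (rule ring_hom_ringI[OF FA_ring FA_ring]) (auto simp: kill_letter_closed kill_letter_mult kill_letter_add kill_letter_one)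

lemma kill_letter_nilcox_rels:
  assumes "r \<in> nilcox_rels (Suc n)"
  shows "kill_letter n r = (\<lambda>w. 0) \<or> kill_letter n r \<in> nilcox_rels n"
proof -
  note kill = kill_letter_mult kill_letter_gen kill_letter_diff
    nc_mult_zero_left nc_mult_zero_right nc_diff_zero
  from assms consider
      (square) i where "r = nc_mult (nc_gen i) (nc_gen i)" "i \<in> {1..<Suc n}"
    | (commute) i j where "r = nc_diff (nc_mult (nc_gen i) (nc_gen j)) (nc_mult (nc_gen j) (nc_gen i))"
        "i \<in> {1..<Suc n}" "j \<in> {1..<Suc n}" "i > j + 1 \<or> j > i + 1"
    | (braid) i where "r = nc_diff (nc_mult (nc_mult (nc_gen i) (nc_gen (i+1))) (nc_gen i))
              (nc_mult (nc_mult (nc_gen (i+1)) (nc_gen i)) (nc_gen (i+1)))"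
        "i \<in> {1..<Suc n}" "i + 1 \<in> {1..<Suc n}"
    unfolding nilcox_rels_def by blast
  then show ?thesis
  proof cases
    case (square i)
    then show ?thesis by (cases "i = n") (auto simp: kill nilcox_rels_def)
  next
    case (commute i j)
    show ?thesis
    proof (cases "i = n \<or> j = n")
      case False
      then have "i \<in> {1..<n}" "j \<in> {1..<n}" using commute by auto
      with commute have "r \<in> nilcox_rels n" unfolding nilcox_rels_def by blast
      moreover have "kill_letter n r = r" using commute False by (simp add: kill)
      ultimately show ?thesis by simp
    qed (use commute in \<open>auto simp: kill\<close>)
  next
    case (braid i)
    then show ?thesis by (cases "i + 1 = n") (auto simp: kill nilcox_rels_def)
  qed
qed

lemma kill_letter_nilcox_ideal: "f \<in> nilcox_ideal (Suc n) \<Longrightarrow> kill_letter n f \<in> nilcox_ideal n"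
proof -
  assume f: "f \<in> nilcox_ideal (Suc n)"
  let ?J = "{r \<in> carrier (FA (Suc n)). kill_letter n r \<in> nilcox_ideal n}"
  have J: "ideal ?J (FA (Suc n))" by (rule ring_hom_ring.ideal_vimage[OF kill_letter_hom ideal_nilcox_ideal])
  have "nilcox_rels (Suc n) \<subseteq> ?J"
  proof
    fix r assume r: "r \<in> nilcox_rels (Suc n)"
    have rc: "r \<in> carrier (FA (Suc n))" using r nilcox_rels_closed by blast
    have z: "(\<lambda>w. 0) \<in> nilcox_ideal n"
      using additive_subgroup.zero_closed[OF ideal.axioms(1)[OF ideal_nilcox_ideal]] by simp
    have "nilcox_rels n \<subseteq> nilcox_ideal n"
      unfolding nilcox_ideal_def by (rule ring.genideal_self[OF FA_ring nilcox_rels_closed])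
    then show "r \<in> ?J" using kill_letter_nilcox_rels[OF r] rc z by auto
  qed
  then have "nilcox_ideal (Suc n) \<subseteq> ?J"
    unfolding nilcox_ideal_def[of "Suc n"] by (rule ring.genideal_minimal[OF FA_ring J])
  then show ?thesis using f by blast
qed

lemma tmap_coset:
  assumes x: "x \<in> carrier (FA (Suc n))"
  shows "tmap n (nilcox_ideal (Suc n) +>\<^bsub>FA (Suc n)\<^esub> x) = nilcox_ideal n +>\<^bsub>FA n\<^esub> kill_letter n x"
proof -
  interpret I1: ideal "nilcox_ideal (Suc n)" "FA (Suc n)" by (rule ideal_nilcox_ideal)
  interpret I0: ideal "nilcox_ideal n" "FA n" by (rule ideal_nilcox_ideal)
  define r where "r = rep (nilcox_ideal (Suc n) +>\<^bsub>FA (Suc n)\<^esub> x)"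
  have r: "r \<in> nilcox_ideal (Suc n) +>\<^bsub>FA (Suc n)\<^esub> x" unfolding r_def by (rule I1.rep_a_rcos[OF x])
  have rc: "r \<in> carrier (FA (Suc n))" by (rule I1.a_elemrcos_carrier[OF x r])
  have "r \<ominus>\<^bsub>FA (Suc n)\<^esub> x \<in> nilcox_ideal (Suc n)"
    using I1.a_rcos_module_minus[OF FA_ring x rc] r by simp
  then have "kill_letter n (\<lambda>w. r w - x w) \<in> nilcox_ideal n"
    using a_minus_FA[OF rc x] by (simp add: kill_letter_nilcox_ideal)
  moreover have "kill_letter n (\<lambda>w. r w - x w) = kill_letter n r \<ominus>\<^bsub>FA n\<^esub> kill_letter n x"
    using a_minus_FA[OF kill_letter_closed[OF rc] kill_letter_closed[OF x]] by (auto simp: kill_letter_def)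
  ultimately have "kill_letter n r \<in> nilcox_ideal n +>\<^bsub>FA n\<^esub> kill_letter n x"
    using I0.a_rcos_module_minus[OF FA_ring kill_letter_closed[OF x] kill_letter_closed[OF rc]] by simp
  then show ?thesis
    using I0.a_repr_independence'[OF _ kill_letter_closed[OF x]] by (simp add: tmap_def r_def)
qed

lemma tmap_closed: "C \<in> carrier (NC (Suc n)) \<Longrightarrow> tmap n C \<in> carrier (NC n)"
  using rep_carrier_NC[of C "Suc n"] tmap_coset[of "rep C" n] by (metis coset_in_carrier_NC kill_letter_closed)

lemma tmap_add: "C \<in> carrier (NC (Suc n)) \<Longrightarrow> D \<in> carrier (NC (Suc n)) \<Longrightarrow>
   tmap n (C \<oplus>\<^bsub>NC (Suc n)\<^esub> D) = tmap n C \<oplus>\<^bsub>NC n\<^esub> tmap n D"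
proof -
  assume C: "C \<in> carrier (NC (Suc n))" and D: "D \<in> carrier (NC (Suc n))"
  obtain x y where x: "x \<in> carrier (FA (Suc n))" "C = nilcox_ideal (Suc n) +>\<^bsub>FA (Suc n)\<^esub> x"
    and y: "y \<in> carrier (FA (Suc n))" "D = nilcox_ideal (Suc n) +>\<^bsub>FA (Suc n)\<^esub> y"
    using carrier_NC_cosetE[OF C] carrier_NC_cosetE[OF D] by blast
  have xy: "(\<lambda>w. x w + y w) \<in> carrier (FA (Suc n))"
    using ring.ring_simprules(1)[OF FA_ring x(1) y(1)] by simp
  show ?thesis using x y xy
    by (simp add: add_NC_coset tmap_coset kill_letter_add kill_letter_closed)
qed

lemma tmap_mult: "C \<in> carrier (NC (Suc n)) \<Longrightarrow> D \<in> carrier (NC (Suc n)) \<Longrightarrow>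
   tmap n (C \<otimes>\<^bsub>NC (Suc n)\<^esub> D) = tmap n C \<otimes>\<^bsub>NC n\<^esub> tmap n D"
proof -
  assume C: "C \<in> carrier (NC (Suc n))" and D: "D \<in> carrier (NC (Suc n))"
  obtain x y where x: "x \<in> carrier (FA (Suc n))" "C = nilcox_ideal (Suc n) +>\<^bsub>FA (Suc n)\<^esub> x"
    and y: "y \<in> carrier (FA (Suc n))" "D = nilcox_ideal (Suc n) +>\<^bsub>FA (Suc n)\<^esub> y"
    using carrier_NC_cosetE[OF C] carrier_NC_cosetE[OF D] by blast
  show ?thesis using x y
    by (simp add: mult_NC_coset tmap_coset kill_letter_mult kill_letter_closed nc_mult_closed)
qed

lemma tmap_one: "tmap n \<one>\<^bsub>NC (Suc n)\<^esub> = \<one>\<^bsub>NC n\<^esub>"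
proof -
  have "nc_one \<in> carrier (FA (Suc n))" by (auto simp: carrier_FA nc_one_def)
  then show ?thesis by (simp add: NC_simps tmap_coset kill_letter_one)
qed

lemma tmap_hom: "ring_hom_ring (NC (Suc n)) (NC n) (tmap n)"
  by (rule ring_hom_ringI[OF NC_ring NC_ring]) (auto simp: tmap_closed tmap_add tmap_mult tmap_one)

lemma tmap_zero: "tmap n \<zero>\<^bsub>NC (Suc n)\<^esub> = \<zero>\<^bsub>NC n\<^esub>"
  using ring_hom_zero[OF ring_hom_ring.homh[OF tmap_hom] NC_ring NC_ring] .

lemma chi_closed: "C \<in> carrier (NC n) \<Longrightarrow> chi n C \<in> carrier (NC (Suc n))"
  unfolding chi_def using rep_carrier_NC[of C n] by (metis coset_in_carrier_NC carrier_FA_mono)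

lemma tmap_chi: "C \<in> carrier (NC n) \<Longrightarrow> tmap n (chi n C) = C"
proof -
  assume C: "C \<in> carrier (NC n)"
  have r: "rep C \<in> carrier (FA n)" "C = nilcox_ideal n +>\<^bsub>FA n\<^esub> rep C" using rep_carrier_NC[OF C] by auto
  show ?thesis unfolding chi_def using tmap_coset[OF carrier_FA_mono[OF r(1)]] kill_letter_id[OF r(1)] r(2) by simp
qed

section \<open>The isomorphism for a single n\<close>

lemma tensor_Dmod_Imod_iso:
  "\<exists>\<phi>. bimod_iso (carrier (NC n)) (carrier (NC n))
     (tensor (carrier (NC (Suc n))) (Dmod n) (Imod n)) (regular (NC n)) \<phi>"
proof -
  interpret A: ring "NC n" by (rule NC_ring)
  interpret B: ring "NC (Suc n)" by (rule NC_ring)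
  let ?K = "tker (carrier (NC (Suc n))) (Dmod n) (Imod n)"
  have delta_equiv: "(\<lambda>z. delta (m, x) z - delta (\<one>\<^bsub>NC (Suc n)\<^esub>, tmap n m \<otimes>\<^bsub>NC n\<^esub> x) z) \<in> ?K"
    if "m \<in> carrier (NC (Suc n))" "x \<in> carrier (NC n)" for m x
    using tker_balanced[of "\<one>\<^bsub>NC (Suc n)\<^esub>" "Dmod n" m "carrier (NC (Suc n))" x "Imod n"] that
    by (simp add: Dmod_def Imod_def)
  have add_equiv: "(\<lambda>z. delta (\<one>\<^bsub>NC (Suc n)\<^esub>, t \<oplus>\<^bsub>NC n\<^esub> t') z - delta (\<one>\<^bsub>NC (Suc n)\<^esub>, t) z
      - delta (\<one>\<^bsub>NC (Suc n)\<^esub>, t') z) \<in> ?K"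
    if "t \<in> carrier (NC n)" "t' \<in> carrier (NC n)" for t t'
    using tker_add_right[of "\<one>\<^bsub>NC (Suc n)\<^esub>" "Dmod n" t "Imod n" t' "carrier (NC (Suc n))"] that
    by (simp add: Dmod_def Imod_def)
  interpret tensor_recognition "carrier (NC (Suc n))" "Dmod n" "Imod n" "NC n"
    "carrier (NC n)" "carrier (NC n)" "regular (NC n)"
    "\<lambda>(d, i). tmap n d \<otimes>\<^bsub>NC n\<^esub> i" "\<lambda>a. (\<one>\<^bsub>NC (Suc n)\<^esub>, a)"
    by unfold_locales
      (auto simp: Dmod_def Imod_def regular_def tmap_closed chi_closed tmap_mult tmap_add
        tmap_chi tmap_one A.l_distr A.r_distr B.l_distr A.m_assoc B.m_assoc
        intro: delta_equiv[unfolded Dmod_def Imod_def] add_equiv[unfolded Dmod_def Imod_def])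
  show ?thesis using tensor_iso by blast
qed

section \<open>Direct sums\<close>

definition direct_sum :: "(nat \<Rightarrow> ('a, 'b) ring_scheme) \<Rightarrow> (nat \<Rightarrow> 'a) set" where
  "direct_sum Rs = {a. (\<forall>n. a n \<in> carrier (Rs n)) \<and> finite {n. a n \<noteq> \<zero>\<^bsub>Rs n\<^esub>}}"

text \<open>Only the additive group of this record is meaningful: the componentwise unit is not
  finitely supported.\<close>
definition direct_sum_group :: "(nat \<Rightarrow> ('a, 'b) ring_scheme) \<Rightarrow> (nat \<Rightarrow> 'a) ring" where
  "direct_sum_group Rs =
     \<lparr>carrier = direct_sum Rs, mult = (\<lambda>a b n. a n \<otimes>\<^bsub>Rs n\<^esub> b n), one = (\<lambda>n. \<one>\<^bsub>Rs n\<^esub>),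
      zero = (\<lambda>n. \<zero>\<^bsub>Rs n\<^esub>), add = (\<lambda>a b n. a n \<oplus>\<^bsub>Rs n\<^esub> b n)\<rparr>"

lemma carrier_direct_sum_group [simp]: "carrier (direct_sum_group Rs) = direct_sum Rs"
  by (simp add: direct_sum_group_def)

lemma direct_sum_component: "a \<in> direct_sum Rs \<Longrightarrow> a n \<in> carrier (Rs n)"
  by (simp add: direct_sum_def)

context
  fixes Rs :: "nat \<Rightarrow> ('a, 'b) ring_scheme"
  assumes rings: "\<And>n. ring (Rs n)"
begin

lemma direct_sum_add:
  assumes "a \<in> direct_sum Rs" "b \<in> direct_sum Rs"
  shows "(\<lambda>n. a n \<oplus>\<^bsub>Rs n\<^esub> b n) \<in> direct_sum Rs"
proof -
  have "{n. a n \<oplus>\<^bsub>Rs n\<^esub> b n \<noteq> \<zero>\<^bsub>Rs n\<^esub>} \<subseteq> {n. a n \<noteq> \<zero>\<^bsub>Rs n\<^esub>} \<union> {n. b n \<noteq> \<zero>\<^bsub>Rs n\<^esub>}"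
    using assms by (auto simp: direct_sum_def ring.ring_simprules[OF rings])
  with assms show ?thesis
    by (auto simp: direct_sum_def ring.ring_simprules[OF rings] intro: finite_subset)
qed

lemma direct_sum_mult_left:
  assumes "\<And>n. a n \<in> carrier (Rs n)" "b \<in> direct_sum Rs"
  shows "(\<lambda>n. a n \<otimes>\<^bsub>Rs n\<^esub> b n) \<in> direct_sum Rs"
proof -
  have "{n. a n \<otimes>\<^bsub>Rs n\<^esub> b n \<noteq> \<zero>\<^bsub>Rs n\<^esub>} \<subseteq> {n. b n \<noteq> \<zero>\<^bsub>Rs n\<^esub>}"
    using assms by (auto simp: ring.ring_simprules[OF rings])
  with assms show ?thesis
    by (auto simp: direct_sum_def ring.ring_simprules[OF rings] intro: finite_subset)
qed

lemma direct_sum_mult_right: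
  assumes "a \<in> direct_sum Rs" "\<And>n. b n \<in> carrier (Rs n)"
  shows "(\<lambda>n. a n \<otimes>\<^bsub>Rs n\<^esub> b n) \<in> direct_sum Rs"
proof -
  have "{n. a n \<otimes>\<^bsub>Rs n\<^esub> b n \<noteq> \<zero>\<^bsub>Rs n\<^esub>} \<subseteq> {n. a n \<noteq> \<zero>\<^bsub>Rs n\<^esub>}"
    using assms by (auto simp: ring.ring_simprules[OF rings])
  with assms show ?thesis
    by (auto simp: direct_sum_def ring.ring_simprules[OF rings] intro: finite_subset)
qed

lemma direct_sum_indicator:
  "finite {n. P n} \<Longrightarrow> (\<lambda>n. if P n then \<one>\<^bsub>Rs n\<^esub> else \<zero>\<^bsub>Rs n\<^esub>) \<in> direct_sum Rs"
  by (auto simp: direct_sum_def ring.ring_simprules[OF rings] elim: rev_finite_subset)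

lemma abelian_group_direct_sum_group: "abelian_group (direct_sum_group Rs)"
proof (rule abelian_groupI)
  fix x y assume "x \<in> carrier (direct_sum_group Rs)" "y \<in> carrier (direct_sum_group Rs)"
  then show "x \<oplus>\<^bsub>direct_sum_group Rs\<^esub> y \<in> carrier (direct_sum_group Rs)"
    by (simp add: direct_sum_group_def direct_sum_add)
next
  fix x assume x: "x \<in> carrier (direct_sum_group Rs)"
  show "\<exists>y\<in>carrier (direct_sum_group Rs). y \<oplus>\<^bsub>direct_sum_group Rs\<^esub> x = \<zero>\<^bsub>direct_sum_group Rs\<^esub>"
  proof
    show "(\<lambda>n. \<ominus>\<^bsub>Rs n\<^esub> x n) \<in> carrier (direct_sum_group Rs)"
      using x by (auto simp: direct_sum_group_def direct_sum_def ring.ring_simprules[OF rings]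
          elim: rev_finite_subset)
  qed (use x in \<open>auto simp: direct_sum_group_def direct_sum_def ring.ring_simprules[OF rings]\<close>)
qed (auto simp: direct_sum_group_def direct_sum_def direct_sum_add ring.ring_simprules[OF rings])

end

lemma Asum_car_eq: "Asum_car = direct_sum NC"
  by (simp add: Asum_car_def direct_sum_def)

lemma Dsum_simps:
  "bcar Dsum = direct_sum (\<lambda>n. NC (Suc n))"
  "badd Dsum d e = (\<lambda>n. d n \<oplus>\<^bsub>NC (Suc n)\<^esub> e n)"
  "lact Dsum a d = (\<lambda>n. chi n (a n) \<otimes>\<^bsub>NC (Suc n)\<^esub> d n)"
  "ract Dsum d a = (\<lambda>n. d n \<otimes>\<^bsub>NC (Suc n)\<^esub> a (Suc n))"
  by (simp_all add: Dsum_def Dmod_def direct_sum_def)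

lemma Isum_simps:
  "bcar Isum = direct_sum NC"
  "badd Isum x y = (\<lambda>n. x n \<oplus>\<^bsub>NC n\<^esub> y n)"
  "lact Isum a x = (\<lambda>n. tmap n (a (Suc n)) \<otimes>\<^bsub>NC n\<^esub> x n)"
  "ract Isum x a = (\<lambda>n. x n \<otimes>\<^bsub>NC n\<^esub> a n)"
  by (simp_all add: Isum_def Imod_def direct_sum_def)

lemma Areg_simps:
  "bcar Areg = direct_sum NC"
  "badd Areg x y = (\<lambda>n. x n \<oplus>\<^bsub>NC n\<^esub> y n)"
  "lact Areg a x = (\<lambda>n. a n \<otimes>\<^bsub>NC n\<^esub> x n)"
  "ract Areg x a = (\<lambda>n. x n \<otimes>\<^bsub>NC n\<^esub> a n)"
  by (simp_all add: Areg_def Asum_car_eq)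

lemma badd_Areg: "badd Areg = add (direct_sum_group NC)"
  by (simp add: Areg_def direct_sum_group_def)

lemma Dsum_component: "d \<in> bcar Dsum \<Longrightarrow> d n \<in> carrier (NC (Suc n))"
  by (simp add: Dsum_simps direct_sum_def)

lemma Dsum_closed:
  "d \<in> bcar Dsum \<Longrightarrow> e \<in> bcar Dsum \<Longrightarrow> badd Dsum d e \<in> bcar Dsum"
  "a \<in> direct_sum NC \<Longrightarrow> d \<in> bcar Dsum \<Longrightarrow> lact Dsum a d \<in> bcar Dsum"
  "d \<in> bcar Dsum \<Longrightarrow> a \<in> direct_sum NC \<Longrightarrow> ract Dsum d a \<in> bcar Dsum"
    apply (simp_all only: Dsum_simps)
    apply (rule direct_sum_add[OF NC_ring]; assumption)
   apply (rule direct_sum_mult_left[OF NC_ring]; simp add: chi_closed direct_sum_component)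
  apply (rule direct_sum_mult_right[OF NC_ring]; simp add: direct_sum_component)
  done

lemma Isum_closed:
  "x \<in> direct_sum NC \<Longrightarrow> y \<in> direct_sum NC \<Longrightarrow> badd Isum x y \<in> direct_sum NC"
  "a \<in> direct_sum NC \<Longrightarrow> x \<in> direct_sum NC \<Longrightarrow> lact Isum a x \<in> direct_sum NC"
  "x \<in> direct_sum NC \<Longrightarrow> a \<in> direct_sum NC \<Longrightarrow> ract Isum x a \<in> direct_sum NC"
    apply (simp_all only: Isum_simps)
    apply (rule direct_sum_add[OF NC_ring]; assumption)
   apply (rule direct_sum_mult_left[OF NC_ring]; simp add: tmap_closed direct_sum_component)
  apply (rule direct_sum_mult_right[OF NC_ring]; simp add: direct_sum_component)
  done

lemma Areg_action:
  assumes "a \<in> direct_sum NC" "x \<in> direct_sum NC" "y \<in> direct_sum NC"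
  shows "lact Areg a x \<in> direct_sum NC" "ract Areg x a \<in> direct_sum NC"
    and "lact Areg a (x \<oplus>\<^bsub>direct_sum_group NC\<^esub> y)
      = lact Areg a x \<oplus>\<^bsub>direct_sum_group NC\<^esub> lact Areg a y"
    and "ract Areg (x \<oplus>\<^bsub>direct_sum_group NC\<^esub> y) a
      = ract Areg x a \<oplus>\<^bsub>direct_sum_group NC\<^esub> ract Areg y a"
  using assms unfolding Areg_simps
  by (auto simp: direct_sum_group_def ring.ring_simprules[OF NC_ring] direct_sum_component
      intro!: direct_sum_mult_left[OF NC_ring] direct_sum_mult_right[OF NC_ring])

definition unit_on_support :: "(nat \<Rightarrow> ncel) \<Rightarrow> nat \<Rightarrow> ncel" where
  "unit_on_support a n = (if a n \<noteq> \<zero>\<^bsub>NC n\<^esub> then \<one>\<^bsub>NC (Suc n)\<^esub> else \<zero>\<^bsub>NC (Suc n)\<^esub>)"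

text \<open>shift d is d regarded as an element of A; then u \<cdot> shift d = d in D whenever u \<in> D is 1
  on the support of d.\<close>
definition shift :: "(nat \<Rightarrow> ncel) \<Rightarrow> nat \<Rightarrow> ncel" where
  "shift d n = (case n of 0 \<Rightarrow> \<zero>\<^bsub>NC 0\<^esub> | Suc m \<Rightarrow> d m)"

definition sum_pairing :: "(nat \<Rightarrow> ncel) \<times> (nat \<Rightarrow> ncel) \<Rightarrow> nat \<Rightarrow> ncel" where
  "sum_pairing = (\<lambda>(d, i) n. tmap n (d n) \<otimes>\<^bsub>NC n\<^esub> i n)"

lemma unit_on_support_closed: "a \<in> direct_sum NC \<Longrightarrow> unit_on_support a \<in> bcar Dsum"
  unfolding Dsum_simps unit_on_support_def[abs_def]
  by (rule direct_sum_indicator[OF NC_ring]) (simp add: direct_sum_def)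

lemma tmap_unit_on_support_mult:
  "a \<in> direct_sum NC \<Longrightarrow> tmap n (unit_on_support a n) \<otimes>\<^bsub>NC n\<^esub> a n = a n"
  using direct_sum_component[of a NC n]
  by (simp add: unit_on_support_def tmap_zero tmap_one ring.ring_simprules[OF NC_ring])

lemma sum_pairing_unit_on_support: "a \<in> direct_sum NC \<Longrightarrow> sum_pairing (unit_on_support a, a) = a"
  by (simp add: fun_eq_iff sum_pairing_def tmap_unit_on_support_mult)

lemma shift_closed: "d \<in> bcar Dsum \<Longrightarrow> shift d \<in> direct_sum NC"
proof -
  assume "d \<in> bcar Dsum"
  then have d: "d m \<in> carrier (NC (Suc m))" "finite {m. d m \<noteq> \<zero>\<^bsub>NC (Suc m)\<^esub>}" for m
    by (auto simp: Dsum_simps direct_sum_def)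
  have "{n. shift d n \<noteq> \<zero>\<^bsub>NC n\<^esub>} \<subseteq> Suc ` {m. d m \<noteq> \<zero>\<^bsub>NC (Suc m)\<^esub>}"
  proof
    fix n assume "n \<in> {n. shift d n \<noteq> \<zero>\<^bsub>NC n\<^esub>}"
    then show "n \<in> Suc ` {m. d m \<noteq> \<zero>\<^bsub>NC (Suc m)\<^esub>}" by (cases n) (auto simp: shift_def)
  qed
  then have "finite {n. shift d n \<noteq> \<zero>\<^bsub>NC n\<^esub>}"
    using d(2) by (rule finite_subset[OF _ finite_imageI])
  moreover have "shift d n \<in> carrier (NC n)" for n
    using d by (cases n) (simp_all add: shift_def ring.ring_simprules[OF NC_ring])
  ultimately show ?thesis by (simp add: direct_sum_def)
qed

lemma sum_pairing_closed: "d \<in> bcar Dsum \<Longrightarrow> i \<in> direct_sum NC \<Longrightarrow> sum_pairing (d, i) \<in> direct_sum NC"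
  unfolding sum_pairing_def prod.case
  by (rule direct_sum_mult_left[OF NC_ring]) (auto intro: tmap_closed Dsum_component)

lemma sum_pairing_bilinear:
  "d \<in> bcar Dsum \<Longrightarrow> d' \<in> bcar Dsum \<Longrightarrow> x \<in> direct_sum NC \<Longrightarrow>
    sum_pairing (badd Dsum d d', x) = sum_pairing (d, x) \<oplus>\<^bsub>direct_sum_group NC\<^esub> sum_pairing (d', x)"
  "d \<in> bcar Dsum \<Longrightarrow> x \<in> direct_sum NC \<Longrightarrow> x' \<in> direct_sum NC \<Longrightarrow>
    sum_pairing (d, badd Isum x x') = sum_pairing (d, x) \<oplus>\<^bsub>direct_sum_group NC\<^esub> sum_pairing (d, x')"
  by (auto simp: fun_eq_iff sum_pairing_def direct_sum_group_def Dsum_simps Isum_simps tmap_add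
      ring.ring_simprules[OF NC_ring] Dsum_component direct_sum_component tmap_closed)

lemma sum_pairing_balanced:
  "d \<in> bcar Dsum \<Longrightarrow> a \<in> direct_sum NC \<Longrightarrow> x \<in> direct_sum NC \<Longrightarrow>
    sum_pairing (ract Dsum d a, x) = sum_pairing (d, lact Isum a x)"
  by (auto simp: fun_eq_iff sum_pairing_def Dsum_simps Isum_simps tmap_mult
      ring.ring_simprules[OF NC_ring] Dsum_component direct_sum_component tmap_closed)

lemma sum_pairing_equivariant:
  "a \<in> direct_sum NC \<Longrightarrow> d \<in> bcar Dsum \<Longrightarrow> x \<in> direct_sum NC \<Longrightarrow>
    sum_pairing (lact Dsum a d, x) = lact Areg a (sum_pairing (d, x))"
  "a \<in> direct_sum NC \<Longrightarrow> d \<in> bcar Dsum \<Longrightarrow> x \<in> direct_sum NC \<Longrightarrow>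
    sum_pairing (d, ract Isum x a) = ract Areg (sum_pairing (d, x)) a"
  by (auto simp: fun_eq_iff sum_pairing_def Dsum_simps Isum_simps Areg_simps tmap_mult tmap_chi
      ring.ring_simprules[OF NC_ring] Dsum_component direct_sum_component tmap_closed chi_closed)

lemma tker_Dsum_unit_on_support:
  assumes u: "u \<in> bcar Dsum" and a: "a \<in> direct_sum NC"
    and u_one: "\<And>n. a n \<noteq> \<zero>\<^bsub>NC n\<^esub> \<Longrightarrow> u n = \<one>\<^bsub>NC (Suc n)\<^esub>"
  shows "(\<lambda>z. delta (u, a) z - delta (unit_on_support a, a) z) \<in> tker Asum_car Dsum Isum"
proof -
  let ?c = "shift (unit_on_support a)"
  have c: "?c \<in> Asum_car"
    using shift_closed[OF unit_on_support_closed[OF a]] by (simp add: Asum_car_eq)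
  have "ract Dsum u ?c = unit_on_support a"
  proof
    fix n
    have "u n \<in> carrier (NC (Suc n))" using u by (rule Dsum_component)
    then show "ract Dsum u ?c n = unit_on_support a n"
      using u_one[of n] by (simp add: Dsum_simps shift_def unit_on_support_def ring.ring_simprules[OF NC_ring])
  qed
  moreover have "lact Isum ?c a = a"
    using tmap_unit_on_support_mult[OF a] by (simp add: Isum_simps shift_def)
  ultimately have "(\<lambda>z. delta (unit_on_support a, a) z - delta (u, a) z) \<in> tker Asum_car Dsum Isum"
    using tker_balanced[OF u c, of a Isum] a by (simp add: Isum_simps)
  from tker_uminus[OF this] show ?thesis by (rule tker_cong) simp
qed

lemma tker_Dsum_simple:
  assumes d: "d \<in> bcar Dsum" and i: "i \<in> direct_sum NC"
  shows "(\<lambda>z. delta (d, i) z - delta (unit_on_support (sum_pairing (d, i)), sum_pairing (d, i)) z)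
    \<in> tker Asum_car Dsum Isum"
proof -
  define u where "u n = (if d n \<noteq> \<zero>\<^bsub>NC (Suc n)\<^esub> then \<one>\<^bsub>NC (Suc n)\<^esub> else \<zero>\<^bsub>NC (Suc n)\<^esub>)" for n
  have dn: "d n \<in> carrier (NC (Suc n))" for n using d by (rule Dsum_component)
  have u: "u \<in> bcar Dsum"
    unfolding u_def[abs_def] Dsum_simps
    by (rule direct_sum_indicator[OF NC_ring]) (use d in \<open>simp add: Dsum_simps direct_sum_def\<close>)
  have r: "shift d \<in> Asum_car" using shift_closed[OF d] by (simp add: Asum_car_eq)
  have "ract Dsum u (shift d) = d"
  proof
    fix n show "ract Dsum u (shift d) n = d n"
      using dn[of n] by (simp add: Dsum_simps shift_def u_def ring.ring_simprules[OF NC_ring])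
  qed
  moreover have "lact Isum (shift d) i = sum_pairing (d, i)"
    by (simp add: Isum_simps shift_def sum_pairing_def)
  ultimately have "(\<lambda>z. delta (d, i) z - delta (u, sum_pairing (d, i)) z) \<in> tker Asum_car Dsum Isum"
    using tker_balanced[OF u r, of i Isum] i by (simp add: Isum_simps)
  moreover have "(\<lambda>z. delta (u, sum_pairing (d, i)) z
      - delta (unit_on_support (sum_pairing (d, i)), sum_pairing (d, i)) z) \<in> tker Asum_car Dsum Isum"
  proof (rule tker_Dsum_unit_on_support[OF u sum_pairing_closed[OF d i]])
    fix n assume "sum_pairing (d, i) n \<noteq> \<zero>\<^bsub>NC n\<^esub>"
    then have "d n \<noteq> \<zero>\<^bsub>NC (Suc n)\<^esub>"
      using direct_sum_component[OF i, of n]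
      by (auto simp: sum_pairing_def tmap_zero ring.ring_simprules[OF NC_ring])
    then show "u n = \<one>\<^bsub>NC (Suc n)\<^esub>" by (simp add: u_def)
  qed
  ultimately show ?thesis by (rule tker_cong[OF tker_add]) simp
qed

lemma tker_Dsum_add:
  assumes s: "s \<in> direct_sum NC" and t: "t \<in> direct_sum NC"
  defines "st \<equiv> s \<oplus>\<^bsub>direct_sum_group NC\<^esub> t"
  shows "(\<lambda>z. delta (unit_on_support st, st) z - delta (unit_on_support s, s) z
    - delta (unit_on_support t, t) z) \<in> tker Asum_car Dsum Isum"
proof -
  define u where "u n = (if s n \<noteq> \<zero>\<^bsub>NC n\<^esub> \<or> t n \<noteq> \<zero>\<^bsub>NC n\<^esub> then \<one>\<^bsub>NC (Suc n)\<^esub> else \<zero>\<^bsub>NC (Suc n)\<^esub>)" for n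
  have "finite ({n. s n \<noteq> \<zero>\<^bsub>NC n\<^esub>} \<union> {n. t n \<noteq> \<zero>\<^bsub>NC n\<^esub>})"
    using s t by (simp add: direct_sum_def)
  then have u: "u \<in> bcar Dsum"
    unfolding u_def[abs_def] Dsum_simps Collect_disj_eq[symmetric]
    by (rule direct_sum_indicator[OF NC_ring])
  have st_apply: "st = (\<lambda>n. s n \<oplus>\<^bsub>NC n\<^esub> t n)" by (simp add: st_def direct_sum_group_def)
  have st: "st \<in> direct_sum NC" unfolding st_apply using s t by (rule direct_sum_add[OF NC_ring])
  have "(\<lambda>z. delta (u, st) z - delta (unit_on_support st, st) z) \<in> tker Asum_car Dsum Isum"
  proof (rule tker_Dsum_unit_on_support[OF u st])
    fix n assume "st n \<noteq> \<zero>\<^bsub>NC n\<^esub>"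
    then show "u n = \<one>\<^bsub>NC (Suc n)\<^esub>"
      by (auto simp: u_def st_apply ring.ring_simprules[OF NC_ring])
  qed
  moreover have "(\<lambda>z. delta (u, s) z - delta (unit_on_support s, s) z) \<in> tker Asum_car Dsum Isum"
    by (rule tker_Dsum_unit_on_support[OF u s]) (simp add: u_def)
  moreover have "(\<lambda>z. delta (u, t) z - delta (unit_on_support t, t) z) \<in> tker Asum_car Dsum Isum"
    by (rule tker_Dsum_unit_on_support[OF u t]) (simp add: u_def)
  moreover have "(\<lambda>z. delta (u, st) z - delta (u, s) z - delta (u, t) z) \<in> tker Asum_car Dsum Isum"
    using tker_add_right[OF u, of s Isum t Asum_car] s t by (simp add: Isum_simps st_apply)
  ultimately have "(\<lambda>z. ((delta (u, st) z - delta (u, s) z - delta (u, t) z)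
      - (delta (u, st) z - delta (unit_on_support st, st) z))
      + (delta (u, s) z - delta (unit_on_support s, s) z)
      + (delta (u, t) z - delta (unit_on_support t, t) z)) \<in> tker Asum_car Dsum Isum"
    by (metis (no_types) tker_add tker_diff)
  then show ?thesis by (rule tker_cong) simp
qed

theorem tensor_Dsum_Isum_iso: "\<exists>\<psi>. bimod_iso Asum_car Asum_car (tensor Asum_car Dsum Isum) Areg \<psi>"
proof -
  interpret tensor_recognition Asum_car Dsum Isum "direct_sum_group NC" Asum_car Asum_car Areg
    sum_pairing "\<lambda>a. (unit_on_support a, a)"
  proof (intro tensor_recognition.intro tensor_factors.intro tensor_recognition_axioms.intro)
    show "abelian_group (direct_sum_group NC)" by (rule abelian_group_direct_sum_group[OF NC_ring])
  qed (simp_all add: Asum_car_eq Isum_simps(1) Areg_simps(1) badd_Areg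
      Dsum_closed Isum_closed Areg_action sum_pairing_bilinear sum_pairing_balanced
      sum_pairing_equivariant sum_pairing_closed unit_on_support_closed sum_pairing_unit_on_support
      tker_Dsum_simple[unfolded Asum_car_eq] tker_Dsum_add[unfolded Asum_car_eq])
  show ?thesis using tensor_iso by blast
qed

theorem mainTheorem11:
  shows "(\<forall>n::nat. \<exists>\<phi>. bimod_iso (carrier (NC n)) (carrier (NC n))
                         (tensor (carrier (NC (Suc n))) (Dmod n) (Imod n)) (regular (NC n)) \<phi>)
       \<and> (\<exists>\<psi>. bimod_iso Asum_car Asum_car (tensor Asum_car Dsum Isum) Areg \<psi>)"
  using tensor_Dmod_Imod_iso tensor_Dsum_Isum_iso by blast

end
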